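(* Let $\mathbf{P}=[\mathbf{Q}_1\ \mathbf{Q}_2]\in\mathbb{R}^{n\times d}$ with $\mathbf{Q}_1\in\mathbb{R}^{n\times d'}$, $\mathbf{Q}_2\in\mathbb{R}^{n\times d''}$, $d=d'+d''$. If one of $\mathbf{Q}_1,\mathbf{Q}_2$ is (sufficiently) node-identifying, then $\mathbf{P}$ is (sufficiently) node-identifying. If one of $\mathbf{Q}_1,\mathbf{Q}_2$ is (sufficiently) adjacency-identifying, then $\mathbf{P}$ is (sufficiently) adjacency-identifying. If $\mathbf{Q}_1$ is (sufficiently) node-identifying and $\mathbf{Q}_2$ is (sufficiently) adjacency-identifying, or vice versa, then $\mathbf{P}$ is (sufficiently) node- and adjacency-identifying.
   Context: $G$ is a graph with $n$ nodes and adjacency matrix $\mathbf{A}(G)$; $d_k>0$ is a fixed constant. A matrix $\mathbf{R}\in\mathbb{R}^{n\times e}$ is node-identifying if there exist $\mathbf{W}^Q,\mathbf{W}^K\in\mathbb{R}^{e\times e}$ such that $\tilde{\mathbf{R}}=\frac{1}{\sqrt{d_k}}\mathbf{R}\mathbf{W}^Q(\mathbf{R}\mathbf{W}^K)^T$ satisfies $\tilde{\mathbf{R}}_{ij}=\max_k\tilde{\mathbf{R}}_{ik}\iff i=j$; adjacency-identifying if for some such matrices $\tilde{\mathbf{R}}_{ij}=\max_k\tilde{\mathbf{R}}_{ik}\iff\mathbf{A}(G)_{ij}=1$; node- and adjacency-identifying if it is both (possibly with different projection matrices). A matrix depending on learnable parameters is sufficiently node-identifying (resp. adjacency-identifying)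 if there is a node-identifying (resp. adjacency-identifying) matrix $\mathbf{R}^*$ such that for every $\varepsilon>0$ some parameter choice makes it lie within Frobenius distance $\varepsilon$ of $\mathbf{R}^*$. The parenthetical "(sufficiently)" is to be read consistently throughout each sentence: either all occurrences or none. *)

theory Defs
  imports Complex_Main
begin

text \<open>Matrices are represented as functions nat => nat => real; an n x e matrix
  only uses the entries with row index < n and column index < e.\<close>

type_synonym mat = "nat \<Rightarrow> nat \<Rightarrow> real"

definition adj_matrix :: "(nat \<Rightarrow> nat \<Rightarrow> bool) \<Rightarrow> mat" where
  "adj_matrix E i j = (if E i j then 1 else 0)"

text \<open>The score matrix  (1/sqrt dk) * (R WQ) (R WK)^T  for R of size n x e, WQ, WK of size e x e.\<close>
definition scores :: "nat \<Rightarrow> real \<Rightarrow> mat \<Rightarrow> mat \<Rightarrow> mat \<Rightarrow> mat" where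
  "scores e dk R WQ WK i j =
     (1 / sqrt dk) * (\<Sum>a<e. (\<Sum>b<e. R i b * WQ b a) * (\<Sum>c<e. R j c * WK c a))"

definition node_identifying :: "nat \<Rightarrow> nat \<Rightarrow> real \<Rightarrow> mat \<Rightarrow> bool" where
  "node_identifying n e dk R \<longleftrightarrow>
     (\<exists>WQ WK. \<forall>i<n. \<forall>j<n.
        (scores e dk R WQ WK i j = (MAX k\<in>{..<n}. scores e dk R WQ WK i k)) \<longleftrightarrow> i = j)"

definition adjacency_identifying ::
    "(nat \<Rightarrow> nat \<Rightarrow> bool) \<Rightarrow> nat \<Rightarrow> nat \<Rightarrow> real \<Rightarrow> mat \<Rightarrow> bool" where
  "adjacency_identifying E n e dk R \<longleftrightarrow>
     (\<exists>WQ WK. \<forall>i<n. \<forall>j<n.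
        (scores e dk R WQ WK i j = (MAX k\<in>{..<n}. scores e dk R WQ WK i k))
          \<longleftrightarrow> adj_matrix E i j = 1)"

definition node_adjacency_identifying ::
    "(nat \<Rightarrow> nat \<Rightarrow> bool) \<Rightarrow> nat \<Rightarrow> nat \<Rightarrow> real \<Rightarrow> mat \<Rightarrow> bool" where
  "node_adjacency_identifying E n e dk R \<longleftrightarrow>
     node_identifying n e dk R \<and> adjacency_identifying E n e dk R"

definition frob_dist :: "nat \<Rightarrow> nat \<Rightarrow> mat \<Rightarrow> mat \<Rightarrow> real" where
  "frob_dist n e R S = sqrt (\<Sum>i<n. \<Sum>j<e. (R i j - S i j)\<^sup>2)"

definition sufficiently :: "(mat \<Rightarrow> bool) \<Rightarrow> nat \<Rightarrow> nat \<Rightarrow> ('p \<Rightarrow> mat) \<Rightarrow> bool" where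
  "sufficiently Prop n e R \<longleftrightarrow>
     (\<exists>Rs. Prop Rs \<and> (\<forall>\<epsilon>>0. \<exists>\<theta>. frob_dist n e (R \<theta>) Rs < \<epsilon>))"

definition hconcat :: "nat \<Rightarrow> mat \<Rightarrow> mat \<Rightarrow> mat" where
  "hconcat d1 Q1 Q2 i j = (if j < d1 then Q1 i j else Q2 i (j - d1))"

end

theory Submission
  imports Defs
begin

text \<open>Choosing projections that are block diagonal with a zero block makes the score matrix
  of \<open>[Q\<^sub>1 Q\<^sub>2]\<close> equal to the score matrix of a single block, so every score matrix
  realised by \<open>Q\<^sub>1\<close> or by \<open>Q\<^sub>2\<close> is realised by \<open>[Q\<^sub>1 Q\<^sub>2]\<close>; both identification
  properties only ask for some realisable score matrix of a certain shape. For the approximate version, the squared Frobenius distance of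
  concatenations is the sum of the squared distances of the blocks, so approximations of
  \<open>Q\<^sub>1\<close> and \<open>Q\<^sub>2\<close> combine; a block without a target is approximated by one of its
  own values.\<close>

lemma sum_lessThan_add:
  "(\<Sum>j<m + n. f j) = (\<Sum>j<m. f j) + (\<Sum>j<n. f (m + j))" for f :: "nat \<Rightarrow> 'a::comm_monoid_add"
  by (induction n) (simp_all add: add.assoc)

definition upper_left_block :: "nat \<Rightarrow> mat \<Rightarrow> mat" where
  "upper_left_block d1 W b a = (if b < d1 \<and> a < d1 then W b a else 0)"

definition lower_right_block :: "nat \<Rightarrow> mat \<Rightarrow> mat" where
  "lower_right_block d1 W b a = (if d1 \<le> b \<and> d1 \<le> a then W (b - d1) (a - d1) else 0)"

lemma scores_hconcat_upper_left_block:
  "scores (d1 + d2) dk (hconcat d1 Q1 Q2) (upper_left_block d1 WQ) (upper_left_block d1 WK)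
     = scores d1 dk Q1 WQ WK"
  by (intro ext) (simp add: scores_def sum_lessThan_add upper_left_block_def hconcat_def)

lemma scores_hconcat_lower_right_block:
  "scores (d1 + d2) dk (hconcat d1 Q1 Q2) (lower_right_block d1 WQ) (lower_right_block d1 WK)
     = scores d2 dk Q2 WQ WK"
  by (intro ext) (simp add: scores_def sum_lessThan_add lower_right_block_def hconcat_def)

lemma ex_scores_hconcat_left:
  assumes "\<exists>WQ WK. \<Phi> (scores d1 dk Q1 WQ WK)"
  shows "\<exists>WQ WK. \<Phi> (scores (d1 + d2) dk (hconcat d1 Q1 Q2) WQ WK)"
proof -
  obtain WQ WK where "\<Phi> (scores d1 dk Q1 WQ WK)"
    using assms by blast
  then have "\<Phi> (scores (d1 + d2) dk (hconcat d1 Q1 Q2) (upper_left_block d1 WQ) (upper_left_block d1 WK))"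
    by (simp only: scores_hconcat_upper_left_block)
  then show ?thesis by blast
qed

lemma ex_scores_hconcat_right:
  assumes "\<exists>WQ WK. \<Phi> (scores d2 dk Q2 WQ WK)"
  shows "\<exists>WQ WK. \<Phi> (scores (d1 + d2) dk (hconcat d1 Q1 Q2) WQ WK)"
proof -
  obtain WQ WK where "\<Phi> (scores d2 dk Q2 WQ WK)"
    using assms by blast
  then have "\<Phi> (scores (d1 + d2) dk (hconcat d1 Q1 Q2) (lower_right_block d1 WQ) (lower_right_block d1 WK))"
    by (simp only: scores_hconcat_lower_right_block)
  then show ?thesis by blast
qed

lemma node_identifying_hconcat_left:
  "node_identifying n d1 dk Q1 \<Longrightarrow> node_identifying n (d1 + d2) dk (hconcat d1 Q1 Q2)"
  unfolding node_identifying_def by (rule ex_scores_hconcat_left)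

lemma node_identifying_hconcat_right:
  "node_identifying n d2 dk Q2 \<Longrightarrow> node_identifying n (d1 + d2) dk (hconcat d1 Q1 Q2)"
  unfolding node_identifying_def by (rule ex_scores_hconcat_right)

lemma adjacency_identifying_hconcat_left:
  "adjacency_identifying E n d1 dk Q1 \<Longrightarrow> adjacency_identifying E n (d1 + d2) dk (hconcat d1 Q1 Q2)"
  unfolding adjacency_identifying_def by (rule ex_scores_hconcat_left)

lemma adjacency_identifying_hconcat_right:
  "adjacency_identifying E n d2 dk Q2 \<Longrightarrow> adjacency_identifying E n (d1 + d2) dk (hconcat d1 Q1 Q2)"
  unfolding adjacency_identifying_def by (rule ex_scores_hconcat_right)

lemma node_adjacency_identifying_hconcat_left:
  "node_identifying n d1 dk Q1 \<Longrightarrow> adjacency_identifying E n d2 dk Q2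
     \<Longrightarrow> node_adjacency_identifying E n (d1 + d2) dk (hconcat d1 Q1 Q2)"
  unfolding node_adjacency_identifying_def
  by (simp add: node_identifying_hconcat_left adjacency_identifying_hconcat_right)

lemma node_adjacency_identifying_hconcat_right:
  "adjacency_identifying E n d1 dk Q1 \<Longrightarrow> node_identifying n d2 dk Q2
     \<Longrightarrow> node_adjacency_identifying E n (d1 + d2) dk (hconcat d1 Q1 Q2)"
  unfolding node_adjacency_identifying_def
  by (simp add: adjacency_identifying_hconcat_left node_identifying_hconcat_right)

lemma frob_dist_hconcat_le:
  "frob_dist n (d1 + d2) (hconcat d1 A B) (hconcat d1 C D)
     \<le> frob_dist n d1 A C + frob_dist n d2 B D"
proof -
  have "frob_dist n (d1 + d2) (hconcat d1 A B) (hconcat d1 C D)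
      = sqrt ((\<Sum>i<n. \<Sum>j<d1. (A i j - C i j)\<^sup>2) + (\<Sum>i<n. \<Sum>j<d2. (B i j - D i j)\<^sup>2))"
    by (simp add: frob_dist_def sum_lessThan_add sum.distrib hconcat_def)
  also have "\<dots> \<le> frob_dist n d1 A C + frob_dist n d2 B D"
    unfolding frob_dist_def by (rule sqrt_add_le_add_sqrt) (simp_all add: sum_nonneg)
  finally show ?thesis .
qed

lemma sufficiently_True: "sufficiently (\<lambda>_. True) n e Q"
proof -
  have "frob_dist n e (Q \<theta>) (Q \<theta>) < \<epsilon>" if "\<epsilon> > 0" for \<theta> \<epsilon>
    using that by (simp add: frob_dist_def)
  then show ?thesis
    unfolding sufficiently_def by blast
qed

lemma sufficiently_hconcat:
  assumes "sufficiently P1 n d1 Q1" and "sufficiently P2 n d2 Q2"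
    and "\<And>R1 R2. P1 R1 \<Longrightarrow> P2 R2 \<Longrightarrow> P (hconcat d1 R1 R2)"
  shows "sufficiently P n (d1 + d2) (\<lambda>(a, b). hconcat d1 (Q1 a) (Q2 b))"
proof -
  obtain R1 where "P1 R1" and R1: "\<And>\<epsilon>. \<epsilon> > 0 \<Longrightarrow> \<exists>a. frob_dist n d1 (Q1 a) R1 < \<epsilon>"
    using assms(1) unfolding sufficiently_def by blast
  obtain R2 where "P2 R2" and R2: "\<And>\<epsilon>. \<epsilon> > 0 \<Longrightarrow> \<exists>b. frob_dist n d2 (Q2 b) R2 < \<epsilon>"
    using assms(2) unfolding sufficiently_def by blast
  have "\<exists>t. frob_dist n (d1 + d2) ((\<lambda>(a, b). hconcat d1 (Q1 a) (Q2 b)) t) (hconcat d1 R1 R2) < \<epsilon>"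
    if "\<epsilon> > 0" for \<epsilon> :: real
  proof -
    obtain a where a: "frob_dist n d1 (Q1 a) R1 < \<epsilon> / 2"
      using R1 \<open>\<epsilon> > 0\<close> half_gt_zero by blast
    obtain b where b: "frob_dist n d2 (Q2 b) R2 < \<epsilon> / 2"
      using R2 \<open>\<epsilon> > 0\<close> half_gt_zero by blast
    have "frob_dist n (d1 + d2) (hconcat d1 (Q1 a) (Q2 b)) (hconcat d1 R1 R2) < \<epsilon>"
      using frob_dist_hconcat_le[of n d1 d2 "Q1 a" "Q2 b" R1 R2] a b by linarith
    then show ?thesis by auto
  qed
  moreover have "P (hconcat d1 R1 R2)"
    using assms(3) \<open>P1 R1\<close> \<open>P2 R2\<close> .
  ultimately show ?thesis
    unfolding sufficiently_def by blast
qed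

lemma sufficiently_hconcat_left:
  assumes "sufficiently P1 n d1 Q1" and "\<And>R1 R2. P1 R1 \<Longrightarrow> P (hconcat d1 R1 R2)"
  shows "sufficiently P n (d1 + d2) (\<lambda>(a, b). hconcat d1 (Q1 a) (Q2 b))"
  by (rule sufficiently_hconcat[OF assms(1) sufficiently_True]) (rule assms(2))

lemma sufficiently_hconcat_right:
  assumes "sufficiently P2 n d2 Q2" and "\<And>R1 R2. P2 R2 \<Longrightarrow> P (hconcat d1 R1 R2)"
  shows "sufficiently P n (d1 + d2) (\<lambda>(a, b). hconcat d1 (Q1 a) (Q2 b))"
  by (rule sufficiently_hconcat[OF sufficiently_True assms(1)]) (rule assms(2))

theorem lemmaF11:
  fixes n d1 d2 :: nat and dk :: real and E :: "nat \<Rightarrow> nat \<Rightarrow> bool"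
  assumes dk_pos: "dk > 0"
  shows
    \<comment> \<open>plain reading\<close>
    "(\<forall>Q1 Q2 :: mat.
       ((node_identifying n d1 dk Q1 \<or> node_identifying n d2 dk Q2)
          \<longrightarrow> node_identifying n (d1 + d2) dk (hconcat d1 Q1 Q2))
     \<and> ((adjacency_identifying E n d1 dk Q1 \<or> adjacency_identifying E n d2 dk Q2)
          \<longrightarrow> adjacency_identifying E n (d1 + d2) dk (hconcat d1 Q1 Q2))
     \<and> (((node_identifying n d1 dk Q1 \<and> adjacency_identifying E n d2 dk Q2)
          \<or> (adjacency_identifying E n d1 dk Q1 \<and> node_identifying n d2 dk Q2))
          \<longrightarrow> node_adjacency_identifying E n (d1 + d2) dk (hconcat d1 Q1 Q2)))
     \<and>
     \<comment> \<open>sufficiently reading: Q1, Q2 with independent parameters\<close>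
     (\<forall>(Q1 :: 'p \<Rightarrow> mat) (Q2 :: 'q \<Rightarrow> mat).
       let P = (\<lambda>(a, b). hconcat d1 (Q1 a) (Q2 b)) in
       ((sufficiently (node_identifying n d1 dk) n d1 Q1
           \<or> sufficiently (node_identifying n d2 dk) n d2 Q2)
          \<longrightarrow> sufficiently (node_identifying n (d1 + d2) dk) n (d1 + d2) P)
     \<and> ((sufficiently (adjacency_identifying E n d1 dk) n d1 Q1
           \<or> sufficiently (adjacency_identifying E n d2 dk) n d2 Q2)
          \<longrightarrow> sufficiently (adjacency_identifying E n (d1 + d2) dk) n (d1 + d2) P)
     \<and> (((sufficiently (node_identifying n d1 dk) n d1 Q1
            \<and> sufficiently (adjacency_identifying E n d2 dk) n d2 Q2)
          \<or> (sufficiently (adjacency_identifying E n d1 dk) n d1 Q1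
            \<and> sufficiently (node_identifying n d2 dk) n d2 Q2))
          \<longrightarrow> sufficiently (node_adjacency_identifying E n (d1 + d2) dk) n (d1 + d2) P))"
  unfolding Let_def
proof (intro conjI allI)
  fix Q1 Q2 :: mat
  show "node_identifying n d1 dk Q1 \<or> node_identifying n d2 dk Q2 \<longrightarrow>
      node_identifying n (d1 + d2) dk (hconcat d1 Q1 Q2)"
    using node_identifying_hconcat_left node_identifying_hconcat_right by blast
  show "adjacency_identifying E n d1 dk Q1 \<or> adjacency_identifying E n d2 dk Q2 \<longrightarrow>
      adjacency_identifying E n (d1 + d2) dk (hconcat d1 Q1 Q2)"
    using adjacency_identifying_hconcat_left adjacency_identifying_hconcat_right by blast
  show "node_identifying n d1 dk Q1 \<and> adjacency_identifying E n d2 dk Q2 \<or>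
      adjacency_identifying E n d1 dk Q1 \<and> node_identifying n d2 dk Q2 \<longrightarrow>
      node_adjacency_identifying E n (d1 + d2) dk (hconcat d1 Q1 Q2)"
    using node_adjacency_identifying_hconcat_left node_adjacency_identifying_hconcat_right by blast
next
  fix Q1 :: "'p \<Rightarrow> mat" and Q2 :: "'q \<Rightarrow> mat"
  let ?P = "\<lambda>(a, b). hconcat d1 (Q1 a) (Q2 b)"
  let ?NI = "node_identifying n (d1 + d2) dk" and ?AI = "adjacency_identifying E n (d1 + d2) dk"
    and ?NAI = "node_adjacency_identifying E n (d1 + d2) dk"
  show "sufficiently (node_identifying n d1 dk) n d1 Q1
      \<or> sufficiently (node_identifying n d2 dk) n d2 Q2 \<longrightarrow> sufficiently ?NI n (d1 + d2) ?P"
    using sufficiently_hconcat_left[where P = ?NI, OF _ node_identifying_hconcat_left]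
      sufficiently_hconcat_right[where P = ?NI, OF _ node_identifying_hconcat_right] by blast
  show "sufficiently (adjacency_identifying E n d1 dk) n d1 Q1
      \<or> sufficiently (adjacency_identifying E n d2 dk) n d2 Q2 \<longrightarrow> sufficiently ?AI n (d1 + d2) ?P"
    using sufficiently_hconcat_left[where P = ?AI, OF _ adjacency_identifying_hconcat_left]
      sufficiently_hconcat_right[where P = ?AI, OF _ adjacency_identifying_hconcat_right] by blast
  show "sufficiently (node_identifying n d1 dk) n d1 Q1
      \<and> sufficiently (adjacency_identifying E n d2 dk) n d2 Q2
      \<or> sufficiently (adjacency_identifying E n d1 dk) n d1 Q1
      \<and> sufficiently (node_identifying n d2 dk) n d2 Q2 \<longrightarrow> sufficiently ?NAI n (d1 + d2) ?P"
    using sufficiently_hconcat[where P = ?NAI, OF _ _ node_adjacency_identifying_hconcat_left]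
      sufficiently_hconcat[where P = ?NAI, OF _ _ node_adjacency_identifying_hconcat_right] by blast
qed

end
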